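(* Let $G=(V,E)$ be a finite simple undirected graph and let $k\ge 0$ be an integer. For each pair of adjacent nodes $r,r'$ of $G$, there exists a maximal $k$-robust partitioning of $G$ in which $r$ and $r'$ lie in the same part.
   Context: A finite simple undirected graph $H$ is $k$-robust if, after removing arbitrary $k$ nodes and their incident edges, the remaining graph is still connected; a clique or a single node is $k$-robust for every $k$. A set $S\subseteq V$ is $k$-robust if the induced subgraph $G[S]$ is $k$-robust. A maximal $k$-robust partitioning of $G$ is a partition of $V$ into nonempty parts such that (1) each node belongs to exactly one part, (2) each part is $k$-robust, and (3) the union of any two or more parts is not $k$-robust. *)

theory Defs
  imports Main
begin

definition simple_graph :: "'a set \<Rightarrow> ('a \<Rightarrow> 'a \<Rightarrow> bool) \<Rightarrow> bool" where
  "simple_graph V E \<longleftrightarrow> finite V \<and> (\<forall>u v. E u v \<longrightarrow> u \<in> V \<and> v \<in> V)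
     \<and> (\<forall>u v. E u v \<longrightarrow> E v u) \<and> (\<forall>v. \<not> E v v)"

text \<open>The induced subgraph G[S] is connected (the empty set counts as connected).\<close>
definition induced_connected :: "('a \<Rightarrow> 'a \<Rightarrow> bool) \<Rightarrow> 'a set \<Rightarrow> bool" where
  "induced_connected E S \<longleftrightarrow>
     (\<forall>u\<in>S. \<forall>v\<in>S. (\<lambda>x y. x \<in> S \<and> y \<in> S \<and> E x y)\<^sup>*\<^sup>* u v)"

definition is_clique :: "('a \<Rightarrow> 'a \<Rightarrow> bool) \<Rightarrow> 'a set \<Rightarrow> bool" where
  "is_clique E S \<longleftrightarrow> (\<forall>u\<in>S. \<forall>v\<in>S. u \<noteq> v \<longrightarrow> E u v)"

definition k_robust :: "('a \<Rightarrow> 'a \<Rightarrow> bool) \<Rightarrow> nat \<Rightarrow> 'a set \<Rightarrow> bool" where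
  "k_robust E k S \<longleftrightarrow> is_clique E S \<or>
     (\<forall>X. X \<subseteq> S \<and> card X \<le> k \<longrightarrow> induced_connected E (S - X))"

definition maximal_k_robust_partitioning ::
  "'a set \<Rightarrow> ('a \<Rightarrow> 'a \<Rightarrow> bool) \<Rightarrow> nat \<Rightarrow> 'a set set \<Rightarrow> bool" where
  "maximal_k_robust_partitioning V E k P \<longleftrightarrow>
     (\<forall>B\<in>P. B \<noteq> {} \<and> B \<subseteq> V) \<and> \<Union>P = V \<and>
     (\<forall>B\<in>P. \<forall>C\<in>P. B \<noteq> C \<longrightarrow> B \<inter> C = {}) \<and>
     (\<forall>B\<in>P. k_robust E k B) \<and>
     (\<forall>Q. Q \<subseteq> P \<and> card Q \<ge> 2 \<longrightarrow> \<not> k_robust E k (\<Union>Q))"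

end

theory Submission
  imports Defs
begin

text \<open>Among the k-robust partitionings that keep the two endpoints of the edge in one part
(there is one: the edge itself and singletons, all cliques), take one with the fewest parts.
Merging two or more of its parts whose union is k-robust would give a partitioning of the
same kind with fewer parts, so it is maximal.\<close>

definition k_robust_partition :: "'a set \<Rightarrow> ('a \<Rightarrow> 'a \<Rightarrow> bool) \<Rightarrow> nat \<Rightarrow> 'a set set \<Rightarrow> bool" where
  "k_robust_partition V E k P \<longleftrightarrow>
     (\<forall>B\<in>P. B \<noteq> {} \<and> B \<subseteq> V) \<and> \<Union>P = V \<and>
     (\<forall>B\<in>P. \<forall>C\<in>P. B \<noteq> C \<longrightarrow> B \<inter> C = {}) \<and>
     (\<forall>B\<in>P. k_robust E k B)"

definition merge_parts :: "'a set set \<Rightarrow> 'a set set \<Rightarrow> 'a set set" where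
  "merge_parts P Q = insert (\<Union>Q) (P - Q)"

lemma maximal_k_robust_partitioningI:
  assumes "k_robust_partition V E k P"
    and "\<And>Q. Q \<subseteq> P \<Longrightarrow> card Q \<ge> 2 \<Longrightarrow> \<not> k_robust E k (\<Union>Q)"
  shows "maximal_k_robust_partitioning V E k P"
  using assms unfolding maximal_k_robust_partitioning_def k_robust_partition_def by simp

lemma k_robust_partition_finite:
  assumes "finite V" and "k_robust_partition V E k P"
  shows "finite P"
proof -
  have "P \<subseteq> Pow V"
    using assms(2) unfolding k_robust_partition_def by blast
  then show ?thesis
    using assms(1) finite_subset by blast
qed

lemma k_robust_partition_edge_singletons:
  assumes "simple_graph V E" and "E r r'"
  shows "k_robust_partition V E k (insert {r, r'} ((\<lambda>v. {v}) ` (V - {r, r'})))"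
proof -
  have "r \<in> V" "r' \<in> V" "E r' r"
    using assms unfolding simple_graph_def by blast+
  moreover have "is_clique E B" if "B \<in> insert {r, r'} ((\<lambda>v. {v}) ` (V - {r, r'}))" for B
    using that assms(2) \<open>E r' r\<close> unfolding is_clique_def by blast
  ultimately show ?thesis
    unfolding k_robust_partition_def k_robust_def by blast
qed

lemma k_robust_partition_merge_parts:
  assumes P: "k_robust_partition V E k P"
    and "Q \<subseteq> P" and "Q \<noteq> {}" and "k_robust E k (\<Union>Q)"
  shows "k_robust_partition V E k (merge_parts P Q)"
proof -
  have parts: "\<And>B. B \<in> P \<Longrightarrow> B \<noteq> {} \<and> B \<subseteq> V" and cover: "\<Union>P = V"
    and disjoint: "\<And>B C. B \<in> P \<Longrightarrow> C \<in> P \<Longrightarrow> B \<noteq> C \<Longrightarrow> B \<inter> C = {}"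
    and robust: "\<And>B. B \<in> P \<Longrightarrow> k_robust E k B"
    using P unfolding k_robust_partition_def by blast+
  have disjoint_from_union: "\<Union>Q \<inter> C = {}" if "C \<in> P - Q" for C
    using disjoint \<open>Q \<subseteq> P\<close> that by blast
  have "\<Union>Q \<noteq> {}" and "\<Union>Q \<subseteq> V"
    using parts \<open>Q \<subseteq> P\<close> \<open>Q \<noteq> {}\<close> by blast+
  have merged_parts: "B = \<Union>Q \<or> B \<in> P - Q" if "B \<in> merge_parts P Q" for B
    using that unfolding merge_parts_def by blast
  have "B \<noteq> {} \<and> B \<subseteq> V" if "B \<in> merge_parts P Q" for B
    using merged_parts[OF that] parts \<open>\<Union>Q \<noteq> {}\<close> \<open>\<Union>Q \<subseteq> V\<close> by blast
  moreover have "k_robust E k B" if "B \<in> merge_parts P Q" for B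
    using merged_parts[OF that] robust \<open>k_robust E k (\<Union>Q)\<close> by blast
  moreover have "\<Union>(merge_parts P Q) = V"
    using cover \<open>Q \<subseteq> P\<close> unfolding merge_parts_def by blast
  moreover have "B \<inter> C = {}" if "B \<in> merge_parts P Q" "C \<in> merge_parts P Q" "B \<noteq> C" for B C
    using merged_parts[OF that(1)] merged_parts[OF that(2)] that(3)
      disjoint disjoint_from_union by (metis DiffD1 Int_commute)
  ultimately show ?thesis
    unfolding k_robust_partition_def by blast
qed

lemma merge_parts_keeps_together:
  assumes "B \<in> P" and "x \<in> B" and "y \<in> B"
  shows "\<exists>B'\<in>merge_parts P Q. x \<in> B' \<and> y \<in> B'"
  using assms unfolding merge_parts_def by (cases "B \<in> Q") auto

lemma card_merge_parts_less:
  assumes "finite P" and "Q \<subseteq> P" and "card Q \<ge> 2"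
  shows "card (merge_parts P Q) < card P"
proof -
  have "card (merge_parts P Q) \<le> card (P - Q) + 1"
    unfolding merge_parts_def using assms(1) by (simp add: card_insert_if)
  also have "\<dots> = card P - card Q + 1"
    using assms(1,2) by (simp add: card_Diff_subset finite_subset)
  finally show ?thesis
    using card_mono[OF assms(1,2)] assms(3) by linarith
qed

theorem lemma2:
  fixes V :: "'a set" and E :: "'a \<Rightarrow> 'a \<Rightarrow> bool" and k :: nat and r r' :: 'a
  assumes "simple_graph V E"
    and "E r r'"
  shows "\<exists>P. maximal_k_robust_partitioning V E k P \<and> (\<exists>B\<in>P. r \<in> B \<and> r' \<in> B)"
proof -
  define good where "good P \<longleftrightarrow> k_robust_partition V E k P \<and> (\<exists>B\<in>P. r \<in> B \<and> r' \<in> B)" for P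
  have "good (insert {r, r'} ((\<lambda>v. {v}) ` (V - {r, r'})))"
    unfolding good_def using k_robust_partition_edge_singletons[OF assms] by blast
  then obtain P where "good P" and fewest: "\<And>P'. good P' \<Longrightarrow> card P \<le> card P'"
    using ex_has_least_nat[of good _ card] by blast
  then have P: "k_robust_partition V E k P" and together: "\<exists>B\<in>P. r \<in> B \<and> r' \<in> B"
    unfolding good_def by blast+
  have "finite P"
    using assms(1) P k_robust_partition_finite unfolding simple_graph_def by blast
  have "\<not> k_robust E k (\<Union>Q)" if "Q \<subseteq> P" and "card Q \<ge> 2" for Q
  proof
    assume "k_robust E k (\<Union>Q)"
    moreover have "Q \<noteq> {}"
      using \<open>card Q \<ge> 2\<close> by auto
    ultimately have "k_robust_partition V E k (merge_parts P Q)"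
      using k_robust_partition_merge_parts[OF P \<open>Q \<subseteq> P\<close>] by blast
    moreover have "\<exists>B\<in>merge_parts P Q. r \<in> B \<and> r' \<in> B"
      using together merge_parts_keeps_together by metis
    ultimately have "good (merge_parts P Q)"
      unfolding good_def ..
    then show False
      using fewest card_merge_parts_less[OF \<open>finite P\<close> that] by fastforce
  qed
  then show ?thesis
    using maximal_k_robust_partitioningI[OF P] together by blast
qed

end
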